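(* Let $\mathcal{A}=\{A_i\}_{i=0}^p$ be a set of $n\times n$ matrices and let $P_{\mathcal{A}}(\lambda)=\sum_{i=0}^{p}\lambda^i A_i$. Let $(\lambda_j,x_j)$, $j=1,\dots,n$, be $n$ eigenpairs of $P_{\mathcal{A}}(\lambda)$, and put $X=[x_1,\dots,x_n]$, $T=\operatorname{diag}(\lambda_1,\dots,\lambda_n)$. Assume that $X$ is nonsingular and that the geometric multiplicity of each of $\lambda_1,\dots,\lambda_n$ (as an eigenvalue of $P_{\mathcal{A}}$) equals one. If $(\tau_n,W)$ solves the GJBD problem of $\mathcal{A}$, then there exist a permutation matrix $\Pi$ and a nonsingular matrix $D\in\mathbb{D}_{\tau_n}$ such that $WD=X\Pi$; i.e., $(\tau_n,X\Pi)$ also solves the GJBD problem (in particular $(X\Pi)^{\star}A_i(X\Pi)\in\mathbb{D}_{\tau_n}$ for all $i=0,\dots,p$).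
   Context: A partition of a positive integer $n$ is a tuple $\tau_n=(n_1,\dots,n_t)$ of positive integers with $\sum_i n_i=n$; its cardinality is $\operatorname{card}(\tau_n)=t$. For an $n\times n$ matrix $A$ partitioned into blocks $A_{jk}$ of size $n_j\times n_k$, $\operatorname{Bdiag}_{\tau_n}(A)=\operatorname{diag}(A_{11},\dots,A_{tt})$ and $\operatorname{OffBdiag}_{\tau_n}(A)=A-\operatorname{Bdiag}_{\tau_n}(A)$; $A$ is $\tau_n$-block diagonal if $\operatorname{OffBdiag}_{\tau_n}(A)=0$, and $\mathbb{D}_{\tau_n}$ denotes the set of $\tau_n$-block diagonal matrices. The coefficient matrices $A_i$ all lie in one of $\mathbb{A}_n\in\{$real symmetric, complex Hermitian, $\mathbb{R}^{n\times n}$, $\mathbb{C}^{n\times n}\}$, and diagonalizers are sought in a class $\mathbb{W}_n\in\{$real orthogonal, unitary, real nonsingular, complex nonsingular $n\times n$ matrices$\}$; $(\cdot)^{\star}$ denotes transpose for real matrices and conjugate transpose for complex matrices. The JBD problem for a partition $\tau_n$: find $W\in\mathbb{W}_n$ with $W^{\star}A_iW\in\mathbb{D}_{\tau_n}$ for all $i=0,\dots,p$. The GJBD problem: find a partition $\tau_n'$ and $W=W(\tau_n')\in\mathbb{W}_n$ solving the JBD problem for $\tau_n'$ such that $\operatorname{card}(\tau_n')$ is maximal among all partitions for which the JBD problem is solvable; such a pair $(\tau_n',W)$ is called a solution of the GJBD problem. An eigenpair $(\lambda,x)$ of $P(\lambda)$ satisfies $\det P(\lambda)=0$, $x\neq 0$,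 $P(\lambda)x=0$; the geometric multiplicity of $\lambda$ is $\dim\ker P(\lambda)$. *)

theory Defs
  imports "Jordan_Normal_Form.Schur_Decomposition" "Jordan_Normal_Form.Matrix_Kernel"
begin

(* All matrices are represented as complex n x n matrices.  Real matrices are those
   with real entries; for them the conjugate transpose coincides with the transpose,
   so (.)^star is uniformly rendered by mat_adjoint (conjugate transpose). *)

definition real_mat :: "complex mat \<Rightarrow> bool" where
  "real_mat M \<longleftrightarrow> (\<forall>i < dim_row M. \<forall>j < dim_col M. M $$ (i,j) \<in> \<real>)"

datatype Aclass = RealSymmetric | ComplexHermitian | RealGeneral | ComplexGeneral

definition in_Aclass :: "Aclass \<Rightarrow> nat \<Rightarrow> complex mat \<Rightarrow> bool" where
  "in_Aclass c n M \<longleftrightarrow> M \<in> carrier_mat n n \<and>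
     (case c of
        RealSymmetric \<Rightarrow> real_mat M \<and> transpose_mat M = M
      | ComplexHermitian \<Rightarrow> mat_adjoint M = M
      | RealGeneral \<Rightarrow> real_mat M
      | ComplexGeneral \<Rightarrow> True)"

datatype Wclass = RealOrthogonal | Unitary | RealNonsingular | ComplexNonsingular

definition in_Wclass :: "Wclass \<Rightarrow> nat \<Rightarrow> complex mat \<Rightarrow> bool" where
  "in_Wclass c n W \<longleftrightarrow> W \<in> carrier_mat n n \<and>
     (case c of
        RealOrthogonal \<Rightarrow> real_mat W \<and> mat_adjoint W * W = 1\<^sub>m n
      | Unitary \<Rightarrow> mat_adjoint W * W = 1\<^sub>m n
      | RealNonsingular \<Rightarrow> real_mat W \<and> invertible_mat W
      | ComplexNonsingular \<Rightarrow> invertible_mat W)"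

(* a partition tau_n = (n_1,...,n_t) of n, as a list; card tau_n = length tau *)
definition is_partition :: "nat list \<Rightarrow> nat \<Rightarrow> bool" where
  "is_partition \<tau> n \<longleftrightarrow> (\<forall>k \<in> set \<tau>. 0 < k) \<and> sum_list \<tau> = n"

(* indices r and c (0-based) lie in the same diagonal block of the partition:
   block k consists of the indices sum(n_1..n_k) <= r < sum(n_1..n_{k+1}) *)
definition same_block :: "nat list \<Rightarrow> nat \<Rightarrow> nat \<Rightarrow> bool" where
  "same_block \<tau> r c \<longleftrightarrow> (\<exists>k < length \<tau>.
      sum_list (take k \<tau>) \<le> r \<and> r < sum_list (take (Suc k) \<tau>) \<and>
      sum_list (take k \<tau>) \<le> c \<and> c < sum_list (take (Suc k) \<tau>))"

definition block_diag :: "nat list \<Rightarrow> complex mat \<Rightarrow> bool" where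
  "block_diag \<tau> M \<longleftrightarrow> (\<forall>r < dim_row M. \<forall>c < dim_col M.
       \<not> same_block \<tau> r c \<longrightarrow> M $$ (r,c) = 0)"

definition Dset :: "nat list \<Rightarrow> complex mat set" where
  "Dset \<tau> = {M. M \<in> carrier_mat (sum_list \<tau>) (sum_list \<tau>) \<and> block_diag \<tau> M}"

definition JBD_sol :: "Wclass \<Rightarrow> nat \<Rightarrow> (nat \<Rightarrow> complex mat) \<Rightarrow> nat list \<Rightarrow> complex mat \<Rightarrow> bool" where
  "JBD_sol wc p A \<tau> W \<longleftrightarrow> in_Wclass wc (sum_list \<tau>) W \<and>
     (\<forall>i \<le> p. mat_adjoint W * A i * W \<in> Dset \<tau>)"

definition GJBD_sol :: "Wclass \<Rightarrow> nat \<Rightarrow> nat \<Rightarrow> (nat \<Rightarrow> complex mat) \<Rightarrow> nat list \<Rightarrow> complex mat \<Rightarrow> bool" where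
  "GJBD_sol wc n p A \<tau> W \<longleftrightarrow> is_partition \<tau> n \<and> JBD_sol wc p A \<tau> W \<and>
     (\<forall>\<tau>' W'. is_partition \<tau>' n \<and> JBD_sol wc p A \<tau>' W' \<longrightarrow> length \<tau>' \<le> length \<tau>)"

definition matpoly :: "nat \<Rightarrow> nat \<Rightarrow> (nat \<Rightarrow> complex mat) \<Rightarrow> complex \<Rightarrow> complex mat" where
  "matpoly n p A z = mat n n (\<lambda>(r,c). \<Sum>i\<le>p. z ^ i * A i $$ (r,c))"

definition eigenpair :: "nat \<Rightarrow> nat \<Rightarrow> (nat \<Rightarrow> complex mat) \<Rightarrow> complex \<Rightarrow> complex vec \<Rightarrow> bool" where
  "eigenpair n p A z x \<longleftrightarrow> det (matpoly n p A z) = 0 \<and> x \<in> carrier_vec n \<and> x \<noteq> 0\<^sub>v n \<and>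
     matpoly n p A z *\<^sub>v x = 0\<^sub>v n"

definition geom_mult :: "nat \<Rightarrow> nat \<Rightarrow> (nat \<Rightarrow> complex mat) \<Rightarrow> complex \<Rightarrow> nat" where
  "geom_mult n p A z = kernel_dim (matpoly n p A z)"

definition perm_mat :: "nat \<Rightarrow> (nat \<Rightarrow> nat) \<Rightarrow> complex mat" where
  "perm_mat n \<sigma> = mat n n (\<lambda>(i,j). if i = \<sigma> j then 1 else 0)"

end

theory Submission
  imports Defs
begin

text \<open>Put Y = W\<inverse> X. The matrix W^* P(\<lambda>_j) W = \<Sum>_i \<lambda>_j^i W^* A_i W is \<tau>-block diagonal
  and congruent to P(\<lambda>_j), so its kernel is one-dimensional and spanned by the j-th column of Y.
  The block parts of a kernel vector of a block diagonal matrix are again kernel vectors, hence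
  every column of Y is supported in a single block. As Y is invertible, a trace comparison shows
  that each block carries exactly as many columns as it has rows, so sorting the columns of Y by
  their block gives a permutation matrix \<Pi> with D = Y\<Pi> \<tau>-block diagonal and W D = X \<Pi>.\<close>

section \<open>Block indices\<close>

text \<open>Only meaningful for i < sum_list \<tau>; blocks are numbered from 0.\<close>

definition block_index :: "nat list \<Rightarrow> nat \<Rightarrow> nat" where
  "block_index \<tau> i = (LEAST k. i < sum_list (take (Suc k) \<tau>))"

lemma sum_list_take_mono:
  "k \<le> k' \<Longrightarrow> sum_list (take k (\<tau>::nat list)) \<le> sum_list (take k' \<tau>)"
  by (metis le_add1 le_add_diff_inverse sum_list_append take_add)

lemma block_index_bounds:
  assumes "i < sum_list \<tau>"
  shows "block_index \<tau> i < length \<tau>"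
    and "sum_list (take (block_index \<tau> i) \<tau>) \<le> i"
    and "i < sum_list (take (Suc (block_index \<tau> i)) \<tau>)"
proof -
  let ?P = "\<lambda>k. i < sum_list (take (Suc k) \<tau>)"
  have last: "?P (length \<tau> - 1)"
    using assms by (cases "\<tau> = []") auto
  show "?P (block_index \<tau> i)"
    unfolding block_index_def by (rule LeastI[of ?P, OF last])
  have "block_index \<tau> i \<le> length \<tau> - 1"
    unfolding block_index_def by (rule Least_le[of ?P, OF last])
  then show "block_index \<tau> i < length \<tau>"
    using assms by (cases \<tau>) auto
  show "sum_list (take (block_index \<tau> i) \<tau>) \<le> i"
  proof (cases "block_index \<tau> i")
    case (Suc m)
    then have "\<not> ?P m"
      using not_less_Least[of m ?P] unfolding block_index_def by auto
    then show ?thesis using Suc by simp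
  qed simp
qed

lemma block_index_eqI:
  assumes "sum_list (take k \<tau>) \<le> i" and "i < sum_list (take (Suc k) \<tau>)"
  shows "block_index \<tau> i = k"
  unfolding block_index_def
proof (rule Least_equality)
  fix k' assume "i < sum_list (take (Suc k') \<tau>)"
  show "k \<le> k'"
  proof (rule ccontr)
    assume "\<not> k \<le> k'"
    then have "sum_list (take (Suc k') \<tau>) \<le> sum_list (take k \<tau>)"
      by (intro sum_list_take_mono) simp
    with \<open>i < sum_list (take (Suc k') \<tau>)\<close> assms(1) show False by simp
  qed
qed fact

lemma same_block_iff_block_index_eq:
  assumes r: "r < sum_list \<tau>" and c: "c < sum_list \<tau>"
  shows "same_block \<tau> r c \<longleftrightarrow> block_index \<tau> r = block_index \<tau> c"
proof
  assume "same_block \<tau> r c"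
  then obtain k where "sum_list (take k \<tau>) \<le> r" "r < sum_list (take (Suc k) \<tau>)"
    "sum_list (take k \<tau>) \<le> c" "c < sum_list (take (Suc k) \<tau>)"
    unfolding same_block_def by blast
  then show "block_index \<tau> r = block_index \<tau> c"
    by (simp add: block_index_eqI)
next
  assume "block_index \<tau> r = block_index \<tau> c"
  then show "same_block \<tau> r c"
    unfolding same_block_def using block_index_bounds[OF r] block_index_bounds[OF c] by metis
qed

lemma Dset_iff:
  "M \<in> Dset \<tau> \<longleftrightarrow> M \<in> carrier_mat (sum_list \<tau>) (sum_list \<tau>) \<and>
     (\<forall>r < sum_list \<tau>. \<forall>c < sum_list \<tau>. block_index \<tau> r \<noteq> block_index \<tau> c \<longrightarrow> M $$ (r,c) = 0)"
  unfolding Dset_def block_diag_def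
  by (auto simp: same_block_iff_block_index_eq)

lemma conjugate_one [simp]: "conjugate (1 :: 'a :: conjugatable_field) = 1"
proof -
  have "conjugate (1::'a) * conjugate 1 = conjugate 1 * 1"
    by (simp flip: conjugate_dist_mul)
  then show ?thesis
    using conjugate_zero_iff[of "1::'a"] by (metis mult_left_cancel one_neq_zero)
qed

lemma dim_row_mat_adjoint [simp]: "dim_row (mat_adjoint A) = dim_col A"
  and dim_col_mat_adjoint [simp]: "dim_col (mat_adjoint A) = dim_row A"
  unfolding mat_adjoint_def by simp_all

lemma mat_adjoint_carrier: "A \<in> carrier_mat m n \<Longrightarrow> mat_adjoint A \<in> carrier_mat n m"
  by auto

lemma index_mat_adjoint [simp]:
  "i < dim_col A \<Longrightarrow> j < dim_row A \<Longrightarrow> mat_adjoint A $$ (i,j) = conjugate (A $$ (j,i))"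
  unfolding mat_adjoint_def by (simp add: mat_of_rows_index)

lemma mat_adjoint_mult:
  fixes A B :: "'a :: conjugatable_field mat"
  assumes A: "A \<in> carrier_mat m k" and B: "B \<in> carrier_mat k n"
  shows "mat_adjoint (A * B) = mat_adjoint B * mat_adjoint A"
proof (rule eq_matI)
  fix i j assume "i < dim_row (mat_adjoint B * mat_adjoint A)" "j < dim_col (mat_adjoint B * mat_adjoint A)"
  with A B have i: "i < n" and j: "j < m" by auto
  with A B show "mat_adjoint (A * B) $$ (i,j) = (mat_adjoint B * mat_adjoint A) $$ (i,j)"
    by (simp add: scalar_prod_def sum_conjugate conjugate_dist_mul mult.commute)
qed (use A B in auto)

lemma mat_adjoint_congruence_mult:
  fixes W D M :: "'a :: conjugatable_field mat"
  assumes "W \<in> carrier_mat n n" "D \<in> carrier_mat n n" "M \<in> carrier_mat n n"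
  shows "mat_adjoint (W * D) * M * (W * D) = mat_adjoint D * (mat_adjoint W * M * W) * D"
proof -
  have "mat_adjoint (W * D) = mat_adjoint D * mat_adjoint W"
    using assms by (intro mat_adjoint_mult)
  then show ?thesis
    using assms mat_adjoint_carrier[OF assms(1)] mat_adjoint_carrier[OF assms(2)]
    by (simp add: assoc_mult_mat[of _ n n _ n _ n])
qed

lemma mat_adjoint_one [simp]: "mat_adjoint (1\<^sub>m n :: 'a :: conjugatable_field mat) = 1\<^sub>m n"
  by (rule eq_matI) auto

lemma invertible_matI_left_inverse:
  fixes A B :: "'a :: field mat"
  assumes A: "A \<in> carrier_mat n n" and B: "B \<in> carrier_mat n n" and BA: "B * A = 1\<^sub>m n"
  shows "invertible_mat A"
  unfolding invertible_mat_def inverts_mat_def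
  using A B BA mat_mult_left_right_inverse[OF B A BA] by auto

lemma invertible_matE:
  fixes A :: "'a :: semiring_1 mat"
  assumes A: "A \<in> carrier_mat n n" and "invertible_mat A"
  obtains B where "B \<in> carrier_mat n n" "A * B = 1\<^sub>m n" "B * A = 1\<^sub>m n"
proof -
  obtain B where AB: "A * B = 1\<^sub>m (dim_row A)" and BA: "B * A = 1\<^sub>m (dim_row B)"
    using assms(2) unfolding invertible_mat_def inverts_mat_def by auto
  have "dim_col B = n" using arg_cong[OF AB, of dim_col] A by auto
  moreover have "dim_row B = n" using arg_cong[OF BA, of dim_col] A by auto
  ultimately show ?thesis using that AB BA A by auto
qed

lemma invertible_mat_mult:
  fixes A B :: "'a :: field mat"
  assumes A: "A \<in> carrier_mat n n" "invertible_mat A" and B: "B \<in> carrier_mat n n" "invertible_mat B"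
  shows "invertible_mat (A * B)"
proof -
  obtain A' where A': "A' \<in> carrier_mat n n" "A' * A = 1\<^sub>m n" using invertible_matE[OF A] by metis
  obtain B' where B': "B' \<in> carrier_mat n n" "B' * B = 1\<^sub>m n" using invertible_matE[OF B] by metis
  have "A' * (A * B) = B"
    using assoc_mult_mat[of A' n n A n B n] A A' B by simp
  then have "(B' * A') * (A * B) = 1\<^sub>m n"
    using assoc_mult_mat[of B' n n A' n "A * B" n] A A' B B' by simp
  then show ?thesis using A B A' B' by (intro invertible_matI_left_inverse) auto
qed

lemma in_Wclass_invertible:
  assumes "in_Wclass wc n W"
  shows "invertible_mat W"
proof -
  have W: "W \<in> carrier_mat n n" using assms unfolding in_Wclass_def by auto
  show ?thesis
  proof (cases wc)
    case RealOrthogonal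
    then show ?thesis using assms W mat_adjoint_carrier[OF W]
      by (auto simp: in_Wclass_def intro: invertible_matI_left_inverse)
  next
    case Unitary
    then show ?thesis using assms W mat_adjoint_carrier[OF W]
      by (auto simp: in_Wclass_def intro: invertible_matI_left_inverse)
  qed (use assms in \<open>auto simp: in_Wclass_def\<close>)
qed

lemma Dset_mult:
  assumes E: "E \<in> Dset \<tau>" and F: "F \<in> Dset \<tau>"
  shows "E * F \<in> Dset \<tau>"
proof -
  let ?n = "sum_list \<tau>"
  have "(E * F) $$ (r,c) = 0"
    if r: "r < ?n" and c: "c < ?n" and rc: "block_index \<tau> r \<noteq> block_index \<tau> c" for r c
  proof -
    have "E $$ (r,l) * F $$ (l,c) = 0" if "l < ?n" for l
      using E F r c rc that unfolding Dset_iff by (cases "block_index \<tau> l = block_index \<tau> r") auto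
    then show ?thesis
      using E F r c unfolding Dset_iff by (auto simp: scalar_prod_def intro!: sum.neutral)
  qed
  with E F show ?thesis unfolding Dset_iff by auto
qed

lemma Dset_mat_adjoint:
  assumes "E \<in> Dset \<tau>"
  shows "mat_adjoint E \<in> Dset \<tau>"
  using assms unfolding Dset_iff by auto

lemma Dset_congruence:
  assumes "D \<in> Dset \<tau>" and "M \<in> Dset \<tau>"
  shows "mat_adjoint D * M * D \<in> Dset \<tau>"
  using assms by (intro Dset_mult Dset_mat_adjoint)

lemma matpoly_carrier: "matpoly n p A z \<in> carrier_mat n n"
  unfolding matpoly_def by auto

lemma index_mult_mult_mat:
  assumes "L \<in> carrier_mat n n" "Q \<in> carrier_mat n n" "R \<in> carrier_mat n n" "r < n" "c < n"
  shows "(L * Q * R) $$ (r,c) = (\<Sum>k<n. \<Sum>l<n. L $$ (r,k) * Q $$ (k,l) * R $$ (l,c))"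
  using assms
  by (simp add: scalar_prod_def lessThan_atLeast0 sum_distrib_left sum_distrib_right mult.assoc)

lemma mult_matpoly_mult:
  assumes L: "L \<in> carrier_mat n n" and R: "R \<in> carrier_mat n n"
    and A: "\<forall>i \<le> p. A i \<in> carrier_mat n n"
  shows "L * matpoly n p A z * R = matpoly n p (\<lambda>i. L * A i * R) z"
proof (rule eq_matI)
  fix r c assume "r < dim_row (matpoly n p (\<lambda>i. L * A i * R) z)"
    "c < dim_col (matpoly n p (\<lambda>i. L * A i * R) z)"
  then have r: "r < n" and c: "c < n" unfolding matpoly_def by auto
  have "(L * matpoly n p A z * R) $$ (r,c) =
      (\<Sum>k<n. \<Sum>l<n. \<Sum>i\<le>p. z ^ i * (L $$ (r,k) * A i $$ (k,l) * R $$ (l,c)))"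
    using index_mult_mult_mat[OF L matpoly_carrier R r c] r c
    by (simp add: matpoly_def sum_distrib_left sum_distrib_right mult_ac)
  also have "\<dots> = (\<Sum>i\<le>p. z ^ i * (\<Sum>k<n. \<Sum>l<n. L $$ (r,k) * A i $$ (k,l) * R $$ (l,c)))"
    by (simp add: sum_distrib_left sum.swap[of _ "{..p}"])
  also have "\<dots> = matpoly n p (\<lambda>i. L * A i * R) z $$ (r,c)"
    using index_mult_mult_mat[OF L _ R r c] A r c by (simp add: matpoly_def)
  finally show "(L * matpoly n p A z * R) $$ (r,c) = matpoly n p (\<lambda>i. L * A i * R) z $$ (r,c)" .
qed (use L R in \<open>auto simp: matpoly_def\<close>)

lemma matpoly_in_Dset:
  assumes "\<forall>i \<le> p. B i \<in> Dset \<tau>"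
  shows "matpoly (sum_list \<tau>) p B z \<in> Dset \<tau>"
  using assms unfolding Dset_iff matpoly_def by auto

section \<open>Kernel vectors of block diagonal matrices\<close>

lemma kernel_dim_one_multiple:
  fixes M :: "'a :: field mat"
  assumes M: "M \<in> carrier_mat n n" and dim: "kernel_dim M = 1"
    and x: "x \<in> mat_kernel M" "x \<noteq> 0\<^sub>v n" and u: "u \<in> mat_kernel M"
  shows "\<exists>c. u = c \<cdot>\<^sub>v x"
proof -
  interpret kernel n n M by unfold_locales (rule M)
  obtain B where B: "finite B" "basis B" using kernel_basis_exists[OF M] by auto
  have "card B = 1" using Ker.dim_basis[OF B] dim by simp
  then obtain b where Bb: "B = {b}" by (meson card_1_singletonE)
  have b: "b \<in> mat_kernel M" "span {b} = mat_kernel M" using B(2) Bb unfolding Ker.basis_def by auto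
  have bc: "b \<in> carrier_vec n" using b(1) mat_kernel_carrier[OF M] by auto
  have multiple_of_b: "\<exists>c. v = c \<cdot>\<^sub>v b" if "v \<in> mat_kernel M" for v
  proof -
    have "v \<in> NC.span {b}" using that b span_same by auto
    then obtain a where "v = NC.lincomb a {b}"
      using NC.finite_in_span[of "{b}" v] bc by auto
    also have "NC.lincomb a {b} = a b \<cdot>\<^sub>v b"
      using bc unfolding NC.lincomb_def by auto
    finally show ?thesis by blast
  qed
  obtain c where c: "x = c \<cdot>\<^sub>v b" using multiple_of_b x(1) by auto
  obtain d where d: "u = d \<cdot>\<^sub>v b" using multiple_of_b u by auto
  have "c \<noteq> 0" using c x(2) bc by auto
  then have "u = (d / c) \<cdot>\<^sub>v x" using c d bc by (auto simp: smult_smult_assoc)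
  then show ?thesis by blast
qed

definition block_part :: "nat list \<Rightarrow> nat \<Rightarrow> 'a :: zero vec \<Rightarrow> 'a vec" where
  "block_part \<tau> k v = vec (dim_vec v) (\<lambda>i. if block_index \<tau> i = k then v $ i else 0)"

lemma Dset_mult_block_part:
  assumes M: "M \<in> Dset \<tau>" and v: "v \<in> carrier_vec (sum_list \<tau>)"
  shows "M *\<^sub>v block_part \<tau> k v = block_part \<tau> k (M *\<^sub>v v)"
proof (rule eq_vecI)
  let ?n = "sum_list \<tau>"
  have Mc: "M \<in> carrier_mat ?n ?n" and Mz: "\<And>r c. r < ?n \<Longrightarrow> c < ?n \<Longrightarrow>
      block_index \<tau> r \<noteq> block_index \<tau> c \<Longrightarrow> M $$ (r,c) = 0"
    using M unfolding Dset_iff by auto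
  fix r assume "r < dim_vec (block_part \<tau> k (M *\<^sub>v v))"
  then have r: "r < ?n" using Mc unfolding block_part_def by auto
  have "(M *\<^sub>v block_part \<tau> k v) $ r
      = (\<Sum>c<?n. M $$ (r,c) * (if block_index \<tau> c = k then v $ c else 0))"
    using Mc v r by (simp add: block_part_def scalar_prod_def lessThan_atLeast0)
  also have "\<dots> = (if block_index \<tau> r = k then \<Sum>c<?n. M $$ (r,c) * v $ c else 0)"
    using Mz[OF r] by (auto intro!: sum.cong sum.neutral)
  also have "\<dots> = block_part \<tau> k (M *\<^sub>v v) $ r"
    using Mc v r by (simp add: block_part_def scalar_prod_def lessThan_atLeast0)
  finally show "(M *\<^sub>v block_part \<tau> k v) $ r = block_part \<tau> k (M *\<^sub>v v) $ r" .
qed (use M v in \<open>auto simp: Dset_iff block_part_def\<close>)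

text \<open>By the previous lemma the block part of y through a nonzero entry lies in the kernel, so it is
  a multiple of y; comparing that entry shows it equals y.\<close>

lemma one_dim_kernel_vector_in_one_block:
  assumes M: "M \<in> Dset \<tau>" and y: "y \<in> carrier_vec (sum_list \<tau>)"
    and My: "M *\<^sub>v y = 0\<^sub>v (sum_list \<tau>)"
    and multiples: "\<And>u. u \<in> carrier_vec (sum_list \<tau>) \<Longrightarrow> M *\<^sub>v u = 0\<^sub>v (sum_list \<tau>) \<Longrightarrow>
      \<exists>c. u = c \<cdot>\<^sub>v y"
  shows "\<exists>k. \<forall>i < sum_list \<tau>. y $ i \<noteq> 0 \<longrightarrow> block_index \<tau> i = k"
proof (cases "\<exists>r < sum_list \<tau>. y $ r \<noteq> 0")
  case True
  then obtain r where r: "r < sum_list \<tau>" "y $ r \<noteq> 0" by blast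
  let ?k = "block_index \<tau> r"
  have part_c: "block_part \<tau> ?k y \<in> carrier_vec (sum_list \<tau>)"
    using y unfolding block_part_def by auto
  have "M *\<^sub>v block_part \<tau> ?k y = 0\<^sub>v (sum_list \<tau>)"
    using Dset_mult_block_part[OF M y] My by (auto simp: block_part_def)
  then obtain c where c: "block_part \<tau> ?k y = c \<cdot>\<^sub>v y"
    using multiples[OF part_c] by blast
  moreover have "block_part \<tau> ?k y $ r = y $ r" and "(c \<cdot>\<^sub>v y) $ r = c * y $ r"
    using y r by (auto simp: block_part_def)
  ultimately have "c = 1" using r(2) by simp
  then have y_part: "block_part \<tau> ?k y = y" using c y by simp
  show ?thesis
  proof (intro exI allI impI)
    fix i assume i: "i < sum_list \<tau>" and yi: "y $ i \<noteq> 0"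
    have "y $ i = (if block_index \<tau> i = ?k then y $ i else 0)"
      using arg_cong[OF y_part, of "\<lambda>v. v $ i"] i y by (simp add: block_part_def)
    with yi show "block_index \<tau> i = ?k" by (auto split: if_splits)
  qed
qed blast

lemma congruent_kernel_vector_in_one_block:
  fixes P :: "complex mat"
  assumes P: "P \<in> carrier_mat n n" and dim: "kernel_dim P = 1"
    and x: "x \<in> carrier_vec n" "x \<noteq> 0\<^sub>v n" "P *\<^sub>v x = 0\<^sub>v n"
    and L: "L \<in> carrier_mat n n" "L' \<in> carrier_mat n n" "L' * L = 1\<^sub>m n"
    and R: "R \<in> carrier_mat n n" "V \<in> carrier_mat n n" "R * V = 1\<^sub>m n" "V * R = 1\<^sub>m n"
    and Bd: "L * P * R \<in> Dset \<tau>" and n: "sum_list \<tau> = n"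
  shows "\<exists>k. \<forall>i < n. (V *\<^sub>v x) $ i \<noteq> 0 \<longrightarrow> block_index \<tau> i = k"
proof -
  let ?M = "L * P * R"
  have M_apply: "?M *\<^sub>v u = L *\<^sub>v (P *\<^sub>v (R *\<^sub>v u))" if u: "u \<in> carrier_vec n" for u
  proof -
    have "?M *\<^sub>v u = (L * P) *\<^sub>v (R *\<^sub>v u)"
      using u P L R by (intro assoc_mult_mat_vec) auto
    also have "\<dots> = L *\<^sub>v (P *\<^sub>v (R *\<^sub>v u))"
      using u P L R by (intro assoc_mult_mat_vec) auto
    finally show ?thesis .
  qed
  have "R *\<^sub>v (V *\<^sub>v x) = x" using R x by (simp flip: assoc_mult_mat_vec)
  then have "?M *\<^sub>v (V *\<^sub>v x) = 0\<^sub>v n"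
    using M_apply[of "V *\<^sub>v x"] x R L by auto
  moreover have "\<exists>c. u = c \<cdot>\<^sub>v (V *\<^sub>v x)"
    if u: "u \<in> carrier_vec n" and Mu: "?M *\<^sub>v u = 0\<^sub>v n" for u
  proof -
    have w: "P *\<^sub>v (R *\<^sub>v u) \<in> carrier_vec n" using u P R by auto
    have "L' *\<^sub>v (?M *\<^sub>v u) = (L' * L) *\<^sub>v (P *\<^sub>v (R *\<^sub>v u))"
      using M_apply[OF u] assoc_mult_mat_vec[OF L(2,1) w] by simp
    then have "P *\<^sub>v (R *\<^sub>v u) = L' *\<^sub>v (?M *\<^sub>v u)" using L(3) w by simp
    then have "R *\<^sub>v u \<in> mat_kernel P"
      using Mu u P L R by (auto intro!: mat_kernelI)
    then obtain c where c: "R *\<^sub>v u = c \<cdot>\<^sub>v x"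
      using kernel_dim_one_multiple[OF P dim _ x(2)] x P by (meson mat_kernelI)
    have "u = V *\<^sub>v (R *\<^sub>v u)" using u R by (simp flip: assoc_mult_mat_vec)
    also have "\<dots> = c \<cdot>\<^sub>v (V *\<^sub>v x)" using c R x by (simp add: mult_mat_vec)
    finally show ?thesis by blast
  qed
  ultimately show ?thesis
    using one_dim_kernel_vector_in_one_block[of ?M \<tau> "V *\<^sub>v x"] Bd R x n by auto
qed

lemma eigenvector_in_one_block:
  assumes W: "W \<in> carrier_mat n n" "V \<in> carrier_mat n n" "W * V = 1\<^sub>m n" "V * W = 1\<^sub>m n"
    and A: "\<forall>i \<le> p. A i \<in> carrier_mat n n"
    and Bd: "\<forall>i \<le> p. mat_adjoint W * A i * W \<in> Dset \<tau>" and n: "sum_list \<tau> = n"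
    and eig: "eigenpair n p A z x" and gm: "geom_mult n p A z = 1"
  shows "\<exists>k. \<forall>i < n. (V *\<^sub>v x) $ i \<noteq> 0 \<longrightarrow> block_index \<tau> i = k"
proof (rule congruent_kernel_vector_in_one_block)
  show "mat_adjoint V * mat_adjoint W = 1\<^sub>m n"
    using mat_adjoint_mult[OF W(1,2)] W(3) by simp
  show "mat_adjoint W * matpoly n p A z * W \<in> Dset \<tau>"
    using matpoly_in_Dset[of p "\<lambda>i. mat_adjoint W * A i * W" \<tau> z] Bd n
    by (simp add: mult_matpoly_mult[OF mat_adjoint_carrier[OF W(1)] W(1) A])
qed (use W eig gm in \<open>auto simp: eigenpair_def geom_mult_def matpoly_carrier mat_adjoint_carrier n\<close>)

section \<open>Counting block sizes\<close>

definition mat_trace :: "'a :: comm_ring_1 mat \<Rightarrow> 'a" where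
  "mat_trace M = (\<Sum>i < dim_row M. M $$ (i,i))"

lemma mat_trace_mult_comm:
  assumes A: "A \<in> carrier_mat n m" and B: "B \<in> carrier_mat m n"
  shows "mat_trace (A * B) = mat_trace (B * A)"
proof -
  have "mat_trace (A * B) = (\<Sum>i<n. \<Sum>l<m. A $$ (i,l) * B $$ (l,i))"
    using A B unfolding mat_trace_def by (simp add: scalar_prod_def lessThan_atLeast0)
  also have "\<dots> = (\<Sum>l<m. \<Sum>i<n. B $$ (l,i) * A $$ (i,l))"
    by (subst sum.swap) (simp add: mult.commute)
  also have "\<dots> = mat_trace (B * A)"
    using A B unfolding mat_trace_def by (simp add: scalar_prod_def lessThan_atLeast0)
  finally show ?thesis .
qed

lemma mat_trace_similar:
  fixes Y :: "'a :: field mat"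
  assumes Y: "Y \<in> carrier_mat n n" "invertible_mat Y"
    and F: "F \<in> carrier_mat n n" and G: "G \<in> carrier_mat n n" and YF: "Y * F = G * Y"
  shows "mat_trace F = mat_trace G"
proof -
  obtain Y' where Y': "Y' \<in> carrier_mat n n" "Y * Y' = 1\<^sub>m n" "Y' * Y = 1\<^sub>m n"
    using invertible_matE[OF Y] by metis
  have "mat_trace F = mat_trace (Y' * (Y * F))"
    using Y Y' F by (simp flip: assoc_mult_mat[of Y' n n Y n F n])
  also have "\<dots> = mat_trace ((G * Y) * Y')"
    using YF Y Y' G by (simp add: mat_trace_mult_comm[of Y' n n])
  also have "\<dots> = mat_trace G"
    using Y Y' G by (simp add: assoc_mult_mat[of G n n Y n Y' n])
  finally show ?thesis .
qed

definition diag_indicator_mat :: "nat \<Rightarrow> (nat \<Rightarrow> bool) \<Rightarrow> 'a :: zero_neq_one mat" where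
  "diag_indicator_mat n Q = mat n n (\<lambda>(i,j). if i = j \<and> Q i then 1 else 0)"

lemma diag_indicator_mat_carrier: "diag_indicator_mat n Q \<in> carrier_mat n n"
  unfolding diag_indicator_mat_def by auto

lemma index_mult_diag_indicator_mat:
  fixes Y :: "'a :: semiring_1 mat"
  assumes Y: "Y \<in> carrier_mat n n" and r: "r < n" and c: "c < n"
  shows "(diag_indicator_mat n Q * Y) $$ (r,c) = (if Q r then Y $$ (r,c) else 0)"
    and "(Y * diag_indicator_mat n Q) $$ (r,c) = (if Q c then Y $$ (r,c) else 0)"
proof -
  have "(diag_indicator_mat n Q * Y) $$ (r,c) = (\<Sum>l<n. (if r = l \<and> Q r then 1 else 0) * Y $$ (l,c))"
    using Y r c by (simp add: diag_indicator_mat_def scalar_prod_def lessThan_atLeast0)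
  also have "\<dots> = (\<Sum>l<n. if l = r then (if Q r then Y $$ (r,c) else 0) else 0)"
    by (rule sum.cong) auto
  finally show "(diag_indicator_mat n Q * Y) $$ (r,c) = (if Q r then Y $$ (r,c) else 0)"
    using r by simp
  have "(Y * diag_indicator_mat n Q) $$ (r,c) = (\<Sum>l<n. Y $$ (r,l) * (if l = c \<and> Q l then 1 else 0))"
    using Y r c by (simp add: diag_indicator_mat_def scalar_prod_def lessThan_atLeast0)
  also have "\<dots> = (\<Sum>l<n. if l = c then (if Q c then Y $$ (r,c) else 0) else 0)"
    by (rule sum.cong) auto
  finally show "(Y * diag_indicator_mat n Q) $$ (r,c) = (if Q c then Y $$ (r,c) else 0)"
    using c by simp
qed

lemma mat_trace_diag_indicator_mat:
  "mat_trace (diag_indicator_mat n Q :: 'a :: comm_ring_1 mat) = of_nat (card {i. i < n \<and> Q i})"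
proof -
  have "mat_trace (diag_indicator_mat n Q :: 'a mat) = (\<Sum>i \<in> {i. i < n \<and> Q i}. 1)"
    unfolding mat_trace_def diag_indicator_mat_def
    by (simp add: sum.inter_filter[symmetric] lessThan_def conj_commute)
  then show ?thesis by simp
qed

text \<open>The nonzero pattern makes the indicators of the fibres of g and of f similar via Y,
  and their traces are the fibre cardinalities.\<close>

lemma card_fibres_eq_if_nonzero_pattern:
  fixes Y :: "'a :: field_char_0 mat"
  assumes Y: "Y \<in> carrier_mat n n" "invertible_mat Y"
    and pattern: "\<And>i j. i < n \<Longrightarrow> j < n \<Longrightarrow> Y $$ (i,j) \<noteq> 0 \<Longrightarrow> f i = g j"
  shows "card {i. i < n \<and> f i = k} = card {j. j < n \<and> g j = k}"
proof -
  let ?F = "diag_indicator_mat n (\<lambda>j. g j = k) :: 'a mat"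
  let ?G = "diag_indicator_mat n (\<lambda>i. f i = k) :: 'a mat"
  have "Y * ?F = ?G * Y"
  proof (rule eq_matI)
    fix r c assume "r < dim_row (?G * Y)" "c < dim_col (?G * Y)"
    then have r: "r < n" and c: "c < n" using Y by (auto simp: diag_indicator_mat_def)
    show "(Y * ?F) $$ (r,c) = (?G * Y) $$ (r,c)"
      using pattern[OF r c] index_mult_diag_indicator_mat[OF Y(1) r c]
      by (cases "Y $$ (r,c) = 0") auto
  qed (use Y in \<open>auto simp: diag_indicator_mat_def\<close>)
  then have "mat_trace ?F = mat_trace ?G"
    using mat_trace_similar[OF Y] diag_indicator_mat_carrier by blast
  then show ?thesis by (simp add: mat_trace_diag_indicator_mat)
qed

lemma permutation_matching_fibres:
  fixes f g :: "nat \<Rightarrow> 'b"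
  assumes card: "\<And>k. card {i. i < n \<and> f i = k} = card {j. j < n \<and> g j = k}"
  obtains \<sigma> where "\<sigma> permutes {..<n}" "\<And>i. i < n \<Longrightarrow> g (\<sigma> i) = f i"
proof -
  have "\<forall>k. \<exists>h. bij_betw h {i. i < n \<and> f i = k} {j. j < n \<and> g j = k}"
    using card by (auto intro: finite_same_card_bij)
  then obtain H where H: "\<And>k. bij_betw (H k) {i. i < n \<and> f i = k} {j. j < n \<and> g j = k}"
    by metis
  define \<sigma> where "\<sigma> i = (if i < n then H (f i) i else i)" for i
  have \<sigma>_fibre: "\<sigma> i < n \<and> g (\<sigma> i) = f i" if "i < n" for i
    using bij_betwE[OF H[of "f i"]] that unfolding \<sigma>_def by auto
  have "inj_on \<sigma> {..<n}"
  proof (rule inj_onI)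
    fix i i' assume i: "i \<in> {..<n}" and i': "i' \<in> {..<n}" and eq: "\<sigma> i = \<sigma> i'"
    then have "f i = f i'" using \<sigma>_fibre[of i] \<sigma>_fibre[of i'] by auto
    with i i' eq show "i = i'"
      using bij_betw_imp_inj_on[OF H[of "f i"]] unfolding \<sigma>_def by (auto dest: inj_onD)
  qed
  moreover have "\<sigma> ` {..<n} = {..<n}"
    using \<sigma>_fibre calculation by (intro endo_inj_surj) auto
  ultimately have "\<sigma> permutes {..<n}"
    by (intro bij_imp_permutes) (auto simp: bij_betw_def \<sigma>_def)
  with \<sigma>_fibre show ?thesis using that by blast
qed

section \<open>Permutation matrices\<close>

lemma perm_mat_carrier: "perm_mat n \<sigma> \<in> carrier_mat n n"
  unfolding perm_mat_def by auto

lemma index_mult_perm_mat: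
  assumes Y: "Y \<in> carrier_mat m n" and r: "r < m" and c: "c < n" and \<sigma>c: "\<sigma> c < n"
  shows "(Y * perm_mat n \<sigma>) $$ (r,c) = Y $$ (r, \<sigma> c)"
proof -
  have "(Y * perm_mat n \<sigma>) $$ (r,c) = (\<Sum>l<n. Y $$ (r,l) * (if l = \<sigma> c then 1 else 0))"
    using Y r c by (simp add: scalar_prod_def lessThan_atLeast0 perm_mat_def)
  also have "\<dots> = Y $$ (r, \<sigma> c)"
    using \<sigma>c by (simp add: if_distrib cong: if_cong)
  finally show ?thesis .
qed

lemma perm_mat_mult:
  assumes \<sigma>: "\<sigma> permutes {..<n}" and \<rho>: "\<rho> permutes {..<n}"
  shows "perm_mat n \<sigma> * perm_mat n \<rho> = perm_mat n (\<sigma> \<circ> \<rho>)"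
proof (rule eq_matI)
  fix r c assume "r < dim_row (perm_mat n (\<sigma> \<circ> \<rho>))" "c < dim_col (perm_mat n (\<sigma> \<circ> \<rho>))"
  then have r: "r < n" and c: "c < n" by (auto simp: perm_mat_def)
  have "\<rho> c < n" using permutes_in_image[OF \<rho>] c by simp
  then show "(perm_mat n \<sigma> * perm_mat n \<rho>) $$ (r,c) = perm_mat n (\<sigma> \<circ> \<rho>) $$ (r,c)"
    using index_mult_perm_mat[OF perm_mat_carrier r c] r c by (simp add: perm_mat_def)
qed (auto simp: perm_mat_def)

lemma perm_mat_id: "perm_mat n id = 1\<^sub>m n"
  unfolding perm_mat_def by (rule eq_matI) auto

lemma invertible_perm_mat:
  assumes "\<sigma> permutes {..<n}"
  shows "invertible_mat (perm_mat n \<sigma>)"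
proof (rule invertible_matI_left_inverse)
  show "perm_mat n (inv_into UNIV \<sigma>) * perm_mat n \<sigma> = 1\<^sub>m n"
    using assms by (simp add: perm_mat_mult permutes_inv permutes_inv_o perm_mat_id)
qed (rule perm_mat_carrier)+

lemma block_diag_column_permutation:
  fixes Y :: "complex mat"
  assumes Y: "Y \<in> carrier_mat n n" "invertible_mat Y" and n: "sum_list \<tau> = n"
    and cols: "\<And>j. j < n \<Longrightarrow> \<exists>k. \<forall>i < n. Y $$ (i,j) \<noteq> 0 \<longrightarrow> block_index \<tau> i = k"
  obtains \<sigma> where "\<sigma> permutes {..<n}" "Y * perm_mat n \<sigma> \<in> Dset \<tau>"
proof -
  define b where "b j = (SOME k. \<forall>i < n. Y $$ (i,j) \<noteq> 0 \<longrightarrow> block_index \<tau> i = k)" for j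
  have b: "block_index \<tau> i = b j" if "i < n" "j < n" "Y $$ (i,j) \<noteq> 0" for i j
    using someI_ex[OF cols[OF that(2)]] that unfolding b_def by blast
  have "card {i. i < n \<and> block_index \<tau> i = k} = card {j. j < n \<and> b j = k}" for k
    by (rule card_fibres_eq_if_nonzero_pattern[OF Y, of "block_index \<tau>" b]) (rule b)
  then obtain \<sigma> where \<sigma>: "\<sigma> permutes {..<n}" and \<sigma>b: "\<And>i. i < n \<Longrightarrow> b (\<sigma> i) = block_index \<tau> i"
    using permutation_matching_fibres[of n "block_index \<tau>" b] by blast
  have \<sigma>n: "\<sigma> c < n" if "c < n" for c using permutes_in_image[OF \<sigma>] that by simp
  have "(Y * perm_mat n \<sigma>) $$ (r,c) = 0"
    if r: "r < n" and c: "c < n" and rc: "block_index \<tau> r \<noteq> block_index \<tau> c" for r c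
    using index_mult_perm_mat[of Y n n r c \<sigma>] Y(1) r c \<sigma>n[OF c] b[OF r \<sigma>n[OF c]] \<sigma>b[OF c] rc by auto
  then have "Y * perm_mat n \<sigma> \<in> Dset \<tau>"
    using Y(1) perm_mat_carrier n unfolding Dset_iff by auto
  with \<sigma> show ?thesis using that by blast
qed

theorem theorem3p1:
  fixes n p :: nat
    and ac :: Aclass and wc :: Wclass
    and A :: "nat \<Rightarrow> complex mat"
    and lam :: "nat \<Rightarrow> complex" and x :: "nat \<Rightarrow> complex vec"
    and \<tau> :: "nat list" and W :: "complex mat"
  assumes A_class: "\<forall>i \<le> p. in_Aclass ac n (A i)"
    and eig: "\<forall>j < n. eigenpair n p A (lam j) (x j)"
    and X_nonsing: "invertible_mat (mat_of_cols n (map x [0..<n]))"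
    and gm_one: "\<forall>j < n. geom_mult n p A (lam j) = 1"
    and sol: "GJBD_sol wc n p A \<tau> W"
  shows "\<exists>\<sigma> D. \<sigma> permutes {..<n} \<and> D \<in> Dset \<tau> \<and> invertible_mat D \<and>
           W * D = mat_of_cols n (map x [0..<n]) * perm_mat n \<sigma> \<and>
           (\<forall>i \<le> p. mat_adjoint (mat_of_cols n (map x [0..<n]) * perm_mat n \<sigma>) * A i
                      * (mat_of_cols n (map x [0..<n]) * perm_mat n \<sigma>) \<in> Dset \<tau>)"
proof -
  let ?X = "mat_of_cols n (map x [0..<n])"
  have n: "sum_list \<tau> = n" and Wcl: "in_Wclass wc n W"
    and Bd: "\<forall>i \<le> p. mat_adjoint W * A i * W \<in> Dset \<tau>"
    using sol unfolding GJBD_sol_def JBD_sol_def is_partition_def by auto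
  have A: "\<forall>i \<le> p. A i \<in> carrier_mat n n" using A_class unfolding in_Aclass_def by auto
  have W: "W \<in> carrier_mat n n" using Wcl unfolding in_Wclass_def by auto
  obtain V where V: "V \<in> carrier_mat n n" "W * V = 1\<^sub>m n" "V * W = 1\<^sub>m n"
    using invertible_matE[OF W in_Wclass_invertible[OF Wcl]] by metis
  have X: "?X \<in> carrier_mat n n" using mat_of_cols_carrier(1)[of n "map x [0..<n]"] by simp
  have Y: "V * ?X \<in> carrier_mat n n" "invertible_mat (V * ?X)"
    using invertible_mat_mult[OF V(1) invertible_matI_left_inverse[OF V(1) W V(2)] X X_nonsing] V X
    by auto
  have Y_col: "(V * ?X) $$ (i,j) = (V *\<^sub>v x j) $ i" if "i < n" "j < n" for i j
    using that V(1) eig by (simp add: eigenpair_def mult_mat_vec_def)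
  have "\<exists>k. \<forall>i < n. (V * ?X) $$ (i,j) \<noteq> 0 \<longrightarrow> block_index \<tau> i = k" if j: "j < n" for j
  proof -
    obtain k where k: "\<forall>i < n. (V *\<^sub>v x j) $ i \<noteq> 0 \<longrightarrow> block_index \<tau> i = k"
      using eigenvector_in_one_block[OF W V A Bd n eig[rule_format, OF j] gm_one[rule_format, OF j]]
      by blast
    then show ?thesis using Y_col[OF _ j] by auto
  qed
  then obtain \<sigma> where \<sigma>: "\<sigma> permutes {..<n}" and D: "V * ?X * perm_mat n \<sigma> \<in> Dset \<tau>"
    using block_diag_column_permutation[OF Y n] by blast
  let ?D = "V * ?X * perm_mat n \<sigma>"
  have Dc: "?D \<in> carrier_mat n n"
    using mult_carrier_mat[OF mult_carrier_mat[OF V(1) X] perm_mat_carrier] .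
  have WD: "W * ?D = ?X * perm_mat n \<sigma>"
    using W V X perm_mat_carrier by (simp add: assoc_mult_mat[of _ n n _ n _ n, symmetric])
  show ?thesis
  proof (intro exI conjI allI impI)
    show "\<sigma> permutes {..<n}" by (rule \<sigma>)
    show "?D \<in> Dset \<tau>" by (rule D)
    show "invertible_mat ?D"
      by (rule invertible_mat_mult[OF Y perm_mat_carrier invertible_perm_mat[OF \<sigma>]])
    show "W * ?D = ?X * perm_mat n \<sigma>" by (rule WD)
    fix i assume "i \<le> p"
    then show "mat_adjoint (?X * perm_mat n \<sigma>) * A i * (?X * perm_mat n \<sigma>) \<in> Dset \<tau>"
      using Dset_congruence[OF D] Bd A mat_adjoint_congruence_mult[OF W Dc, of "A i"]
      unfolding WD by auto
  qed
qed

end
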